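(* Let $f$ be an injective coloring of a graph $G$. If a walk $W=\langle w_1,\dots,w_{|W|}\rangle$ in $G$ corresponds to a swapping sequence from $f$ to $f$ itself, then $|V(W)|\le (|W|+1)/2$, where $V(W)$ is the set of distinct vertices appearing in $W$ and $|W|$ is the number of entries of the walk.
   Context: A walk $\langle w_1,\dots,w_p\rangle$ corresponds to a swapping sequence $\langle f_1,\dots,f_p\rangle$ from $f=f_1$ to $f_p$ if for $2\le i\le p$, $f_i$ is obtained from $f_{i-1}$ by swapping the colors of $w_{i-1}$ and $w_i$, i.e. $f_i(w_i)=f_{i-1}(w_{i-1})$, $f_i(w_{i-1})=f_{i-1}(w_i)$, and $f_i(v)=f_{i-1}(v)$ for other $v$. *)

theory Defs
  imports Complex_Main
begin

definition simple_graph :: "'a set \<Rightarrow> ('a \<Rightarrow> 'a \<Rightarrow> bool) \<Rightarrow> bool" where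
  "simple_graph V E \<longleftrightarrow>
     (\<forall>u v. E u v \<longrightarrow> u \<in> V \<and> v \<in> V) \<and>
     (\<forall>u v. E u v \<longrightarrow> E v u) \<and> (\<forall>v. \<not> E v v)"

definition is_walk :: "'a set \<Rightarrow> ('a \<Rightarrow> 'a \<Rightarrow> bool) \<Rightarrow> 'a list \<Rightarrow> bool" where
  "is_walk V E ws \<longleftrightarrow> ws \<noteq> [] \<and> set ws \<subseteq> V \<and>
     (\<forall>i. Suc i < length ws \<longrightarrow> E (ws ! i) (ws ! Suc i))"

definition injective_coloring :: "'a set \<Rightarrow> ('a \<Rightarrow> 'c) \<Rightarrow> bool" where
  "injective_coloring V f \<longleftrightarrow> inj_on f V"

text \<open>The walk ws = w_1..w_p corresponds to the swapping sequence fs = f_1..f_p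
  (indices shifted to start at 0): f_i is obtained from f_(i-1) by swapping
  the colors of w_(i-1) and w_i.\<close>
definition corresponds_swapping :: "'a list \<Rightarrow> ('a \<Rightarrow> 'c) list \<Rightarrow> bool" where
  "corresponds_swapping ws fs \<longleftrightarrow> length fs = length ws \<and>
     (\<forall>i. 0 < i \<and> i < length ws \<longrightarrow>
        (fs ! i) (ws ! i) = (fs ! (i - 1)) (ws ! (i - 1)) \<and>
        (fs ! i) (ws ! (i - 1)) = (fs ! (i - 1)) (ws ! i) \<and>
        (\<forall>v. v \<noteq> ws ! i \<and> v \<noteq> ws ! (i - 1) \<longrightarrow> (fs ! i) v = (fs ! (i - 1)) v))"

definition walk_swaps :: "'a list \<Rightarrow> ('a \<Rightarrow> 'c) \<Rightarrow> ('a \<Rightarrow> 'c) \<Rightarrow> bool" where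
  "walk_swaps ws f g \<longleftrightarrow> (\<exists>fs. corresponds_swapping ws fs \<and> fs \<noteq> [] \<and>
      hd fs = f \<and> last fs = g)"

end

theory Submission
  imports Defs
begin

text \<open>Along a swapping sequence the color of the first vertex travels with the walk: it always
  sits on the current vertex, and step i moves exactly one other color, the one found on w_i,
  back onto w_(i-1). A color is therefore displaced only when the walk steps onto the vertex
  holding it. Every vertex v other than w_1 has its color moved away at its first visit, and since
  the sequence ends with the initial coloring, that color must be moved again later. As the
  colors on the walk are distinct, this accounts for at least 2(|V(W)| - 1) of the |W| - 1 steps.
  Neither adjacency nor injectivity outside the walk plays any role.\<close>

text \<open>The (0-based) steps i that carry color c from ws ! i back to ws ! (i - 1).\<close>
definition color_moves :: "'a list \<Rightarrow> ('a \<Rightarrow> 'c) list \<Rightarrow> 'c \<Rightarrow> nat set" where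
  "color_moves ws fs c = {i. 0 < i \<and> i < length ws \<and> (fs ! (i - 1)) (ws ! i) = c}"

lemma corresponds_swapping_step:
  assumes "corresponds_swapping ws fs" and "0 < i" and "i < length ws"
  shows "(fs ! i) (ws ! i) = (fs ! (i - 1)) (ws ! (i - 1))"
    and "(fs ! i) (ws ! (i - 1)) = (fs ! (i - 1)) (ws ! i)"
    and "v \<noteq> ws ! i \<Longrightarrow> v \<noteq> ws ! (i - 1) \<Longrightarrow> (fs ! i) v = (fs ! (i - 1)) v"
  using assms unfolding corresponds_swapping_def by blast+

lemma swapping_carries_first_color:
  assumes "corresponds_swapping ws fs" and "i < length ws"
  shows "(fs ! i) (ws ! i) = (fs ! 0) (ws ! 0)"
  using assms(2)
proof (induction i)
  case (Suc i)
  then show ?case using corresponds_swapping_step(1)[OF assms(1), of "Suc i"] by simp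
qed simp

lemma swapping_unvisited_unchanged:
  assumes "corresponds_swapping ws fs" and "j < length ws" and "\<forall>k\<le>j. ws ! k \<noteq> v"
  shows "(fs ! j) v = (fs ! 0) v"
  using assms(2,3)
proof (induction j)
  case (Suc j)
  have "\<forall>k\<le>j. ws ! k \<noteq> v" and "v \<noteq> ws ! Suc j" and "v \<noteq> ws ! j"
    using Suc.prems(2) by (auto simp: le_Suc_eq)
  moreover from this(1) have "(fs ! j) v = (fs ! 0) v"
    using Suc.IH Suc.prems(1) by simp
  ultimately show ?case
    using corresponds_swapping_step(3)[OF assms(1), of "Suc j" v] Suc.prems(1) by simp
qed simp

lemma swapping_color_stays:
  assumes "corresponds_swapping ws fs" and "i \<le> j" and "j < length ws"
    and "(fs ! i) x = c" and "c \<noteq> (fs ! 0) (ws ! 0)"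
    and "\<forall>k. i < k \<and> k \<le> j \<longrightarrow> (fs ! (k - 1)) (ws ! k) \<noteq> c"
  shows "(fs ! j) x = c"
  using assms(2,3,6)
proof (induction j rule: dec_induct)
  case (step j)
  have "\<forall>k. i < k \<and> k \<le> j \<longrightarrow> (fs ! (k - 1)) (ws ! k) \<noteq> c"
    using step.prems(2) by auto
  then have "(fs ! j) x = c"
    using step.IH step.prems(1) by simp
  moreover have "(fs ! j) (ws ! Suc j) \<noteq> c"
    using step.prems(2)[rule_format, of "Suc j"] step.hyps(1) by simp
  moreover have "(fs ! j) (ws ! j) \<noteq> c"
    using swapping_carries_first_color[OF assms(1), of j] step.prems(1) assms(5) by simp
  ultimately have "x \<noteq> ws ! Suc j" and "x \<noteq> ws ! j" by auto
  with \<open>(fs ! j) x = c\<close> show ?case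
    using corresponds_swapping_step(3)[OF assms(1), of "Suc j" x] step.prems(1) by simp
qed (use assms(4) in simp)

lemma closed_swapping_moves_color_twice:
  assumes swap: "corresponds_swapping ws fs" and closed: "last fs = fs ! 0"
    and inj: "inj_on (fs ! 0) (set ws)"
    and v: "v \<in> set ws" "v \<noteq> ws ! 0"
  shows "2 \<le> card (color_moves ws fs ((fs ! 0) v))"
proof -
  let ?f = "fs ! 0" and ?p = "length ws" and ?M = "color_moves ws fs ((fs ! 0) v)"
  have len: "length fs = ?p" using swap by (simp add: corresponds_swapping_def)
  obtain us zs where split: "ws = us @ v # zs" and "v \<notin> set us"
    using v(1) by (metis in_set_conv_decomp_first)
  define i where "i = length us"
  have i: "i < ?p" "ws ! i = v" and before: "\<forall>k<i. ws ! k \<noteq> v"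
    using split \<open>v \<notin> set us\<close> by (auto simp: i_def nth_append)
  have "0 < i" using i v(2) by (cases i) auto
  define x where "x = ws ! (i - 1)"
  have "x \<noteq> v" and "x \<in> set ws"
    using before \<open>0 < i\<close> i(1) by (auto simp: x_def)
  have first_move: "(fs ! (i - 1)) (ws ! i) = ?f v"
    using swapping_unvisited_unchanged[OF swap, of "i - 1" v] before i \<open>0 < i\<close> by auto
  then have "i \<in> ?M"
    using \<open>0 < i\<close> i(1) by (simp add: color_moves_def)
  have "(fs ! i) x = ?f v"
    using corresponds_swapping_step(2)[OF swap \<open>0 < i\<close> i(1)] first_move by (simp add: x_def)
  have "ws ! 0 \<in> set ws" using i(1) by (intro nth_mem) linarith
  then have "?f v \<noteq> ?f (ws ! 0)"
    using inj_on_eq_iff[OF inj v(1)] v(2) by simp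
  have "\<exists>k. i < k \<and> k \<in> ?M"
  proof (rule ccontr)
    assume "\<nexists>k. i < k \<and> k \<in> ?M"
    then have "\<forall>k. i < k \<and> k \<le> ?p - 1 \<longrightarrow> (fs ! (k - 1)) (ws ! k) \<noteq> ?f v"
      by (auto simp: color_moves_def)
    then have "(fs ! (?p - 1)) x = ?f v"
      using swapping_color_stays[OF swap, of i "?p - 1"] i(1)
        \<open>(fs ! i) x = ?f v\<close> \<open>?f v \<noteq> ?f (ws ! 0)\<close> by simp
    moreover have "last fs = fs ! (?p - 1)"
      using len i(1) by (metis last_conv_nth list.size(3) not_less_zero)
    ultimately have "?f x = ?f v"
      using closed by simp
    then show False
      using inj_on_eq_iff[OF inj \<open>x \<in> set ws\<close> v(1)] \<open>x \<noteq> v\<close> by simp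
  qed
  then obtain k where "i < k" "k \<in> ?M" by blast
  have "card {i, k} = 2" using \<open>i < k\<close> by simp
  moreover have "{i, k} \<subseteq> ?M" using \<open>i \<in> ?M\<close> \<open>k \<in> ?M\<close> by simp
  moreover have "finite ?M" by (simp add: color_moves_def)
  ultimately show ?thesis by (metis card_mono)
qed

lemma closed_swapping_card_bound:
  assumes swap: "corresponds_swapping ws fs" and "ws \<noteq> []" and closed: "last fs = fs ! 0"
    and inj: "inj_on (fs ! 0) (set ws)"
  shows "2 * card (set ws) \<le> length ws + 1"
proof -
  let ?f = "fs ! 0" and ?U = "set ws - {ws ! 0}"
  let ?M = "\<lambda>v. color_moves ws fs (?f v)"
  have disjoint: "\<forall>u\<in>?U. \<forall>v\<in>?U. u \<noteq> v \<longrightarrow> ?M u \<inter> ?M v = {}"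
    using inj by (auto simp: color_moves_def dest: inj_onD)
  have "2 * card ?U = (\<Sum>v\<in>?U. 2)" by simp
  also have "\<dots> \<le> (\<Sum>v\<in>?U. card (?M v))"
    using closed_swapping_moves_color_twice[OF swap closed inj] by (intro sum_mono) auto
  also have "\<dots> = card (\<Union>v\<in>?U. ?M v)"
    using disjoint by (intro card_UN_disjoint [symmetric]) (auto simp: color_moves_def)
  also have "\<dots> \<le> card {1..<length ws}"
    by (intro card_mono) (auto simp: color_moves_def)
  finally have "2 * card ?U \<le> length ws - 1" by simp
  moreover have "card ?U = card (set ws) - 1" and "0 < card (set ws)" and "0 < length ws"
    using \<open>ws \<noteq> []\<close> by (simp_all add: card_gt_0_iff)
  ultimately show ?thesis by linarith
qed

theorem lemma7:
  fixes V :: "'a set" and E :: "'a \<Rightarrow> 'a \<Rightarrow> bool"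
    and f :: "'a \<Rightarrow> 'c" and ws :: "'a list"
  assumes "simple_graph V E"
    and "injective_coloring V f"
    and "is_walk V E ws"
    and "walk_swaps ws f f"
  shows "real (card (set ws)) \<le> (real (length ws) + 1) / 2"
proof -
  obtain fs where swap: "corresponds_swapping ws fs" and "fs \<noteq> []"
    and "hd fs = f" and "last fs = f"
    using assms(4) unfolding walk_swaps_def by blast
  then have f: "fs ! 0 = f" by (simp add: hd_conv_nth)
  have "ws \<noteq> []" and "set ws \<subseteq> V" using assms(3) unfolding is_walk_def by auto
  then have "inj_on (fs ! 0) (set ws)"
    using assms(2) f unfolding injective_coloring_def by (simp add: inj_on_subset)
  then have "2 * card (set ws) \<le> length ws + 1"
    using closed_swapping_card_bound[OF swap \<open>ws \<noteq> []\<close>] \<open>last fs = f\<close> f by simp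
  then show ?thesis by simp
qed

end
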